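(* Let $k=\mathbb{F}_q$, $(Q,W)$ a QP with a cut $C$, $\alpha\in\mathbb{Z}_{\ge0}^{Q_0}$ and $\mu$ a slope function such that $(\alpha,\mu)$ is numb to $C$. Then $$|\varphi_\omega(\mathrm{Rep}^\mu_\alpha(Q))|=q^{\langle\alpha,\alpha\rangle_C}\,|\mathrm{Rep}^\mu_\alpha(J(Q,W;C))|,$$ and consequently $$\frac{|\varphi_\omega(\mathrm{Rep}^\mu_\alpha(Q))|_{\mathrm{vir}}}{|\mathrm{GL}_\alpha|_{\mathrm{vir}}}=q^{\frac12\langle\alpha,\alpha\rangle_{J_C}}\frac{|\mathrm{Rep}^\mu_\alpha(J(Q,W;C))|}{|\mathrm{GL}_\alpha|}.$$
   Context: $Q$ finite quiver, $W$ a potential, $\omega:\mathrm{Rep}_\alpha(Q)\to k$, $M\mapsto\operatorname{tr}W(M)$. A cut is $C\subset Q_1$ with $W$ homogeneous of degree $1$ when arrows of $C$ have degree $1$ and others degree $0$; $Q_C=(Q_0,Q_1\setminus C)$ and $J(Q,W;C)=\widehat{kQ_C}/\langle\partial_cW:c\in C\rangle$ ($\partial_c$ cyclic derivative). A slope function is $\mu=\sigma/\theta$ with $\sigma,\theta$ integral linear forms on $\mathbb{Z}^{Q_0}$ and $\theta(\gamma)>0$ for $\gamma\ne0$; $M$ is $\mu$-semistable if $\mu(\underline{\dim}L)\le\mu(\underline{\dim}M)$ for all nonzero subrepresentations $L$. $\mathrm{Rep}^\mu_\alpha(-)$ denotes the $\mu$-semistable locus. $(\alpha,\mu)$ is numb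 to $C$ if the vector bundle (forgetting arrows in $C$) $\pi:\mathrm{Rep}_\alpha(Q)\to\mathrm{Rep}_\alpha(Q_C)$ restricts to a bundle $\mathrm{Rep}^\mu_\alpha(Q)\to\mathrm{Rep}^\mu_\alpha(Q_C)$, i.e. $\mathrm{Rep}^\mu_\alpha(Q)=\pi^{-1}(\mathrm{Rep}^\mu_\alpha(Q_C))$. $|\varphi_\omega(X)|=|\omega^{-1}(0)|-|\omega^{-1}(1)|$ (numbers of $\mathbb{F}_q$-points), $|X|_{\mathrm{vir}}$-type quantities: $|\varphi_\omega(X)|_{\mathrm{vir}}=q^{-\dim X/2}|\varphi_\omega(X)|$, $|\mathrm{GL}_\alpha|_{\mathrm{vir}}=q^{-\dim\mathrm{GL}_\alpha/2}|\mathrm{GL}_\alpha(\mathbb{F}_q)|$, $\mathrm{GL}_\alpha=\prod_i\mathrm{GL}_{\alpha_i}$. $\langle\alpha,\beta\rangle_Q=\sum_i\alpha_i\beta_i-\sum_{a\in Q_1}\alpha_{ta}\beta_{ha}$, $\langle\alpha,\beta\rangle_C=\sum_{c\in C}\alpha_{tc}\beta_{hc}$, $\langle\alpha,\beta\rangle_{J_C}=\langle\alpha,\beta\rangle_Q+\langle\alpha,\beta\rangle_C+\langle\beta,\alpha\rangle_C$. *)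

theory Defs
  imports Complex_Main "HOL-Library.Function_Algebras"
begin

text \<open>Matrices over a field are functions nat => nat => 'k, with explicit sizes.\<close>

definition mmul :: "nat \<Rightarrow> (nat \<Rightarrow> nat \<Rightarrow> 'k::field) \<Rightarrow> (nat \<Rightarrow> nat \<Rightarrow> 'k) \<Rightarrow> nat \<Rightarrow> nat \<Rightarrow> 'k" where
  "mmul n A B = (\<lambda>i j. \<Sum>l<n. A i l * B l j)"

definition idm :: "nat \<Rightarrow> nat \<Rightarrow> nat \<Rightarrow> 'k::field" where
  "idm n = (\<lambda>i j. if i = j \<and> i < n then 1 else 0)"

definition mtr :: "nat \<Rightarrow> (nat \<Rightarrow> nat \<Rightarrow> 'k::field) \<Rightarrow> 'k" where
  "mtr n A = (\<Sum>i<n. A i i)"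

definition mvec :: "nat \<Rightarrow> (nat \<Rightarrow> nat \<Rightarrow> 'k::field) \<Rightarrow> (nat \<Rightarrow> 'k) \<Rightarrow> nat \<Rightarrow> 'k" where
  "mvec n A u = (\<lambda>i. \<Sum>j<n. A i j * u j)"

definition bounded_mat :: "nat \<Rightarrow> nat \<Rightarrow> (nat \<Rightarrow> nat \<Rightarrow> 'k::field) \<Rightarrow> bool" where
  "bounded_mat r c A \<longleftrightarrow> (\<forall>i j. (r \<le> i \<or> c \<le> j) \<longrightarrow> A i j = 0)"

text \<open>Quiver: arrows of type 'a (finite), vertices 'v (finite), tail src, head tgt.
  A representation of dimension vector al assigns to arrow a an al(tgt a) x al(src a) matrix.\<close>

definition reps :: "('v \<Rightarrow> nat) \<Rightarrow> ('a \<Rightarrow> 'v) \<Rightarrow> ('a \<Rightarrow> 'v) \<Rightarrow> 'a set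
    \<Rightarrow> ('a \<Rightarrow> nat \<Rightarrow> nat \<Rightarrow> 'k::field) set" where
  "reps al src tgt A = {M. \<forall>a i j. (a \<notin> A \<or> al (tgt a) \<le> i \<or> al (src a) \<le> j) \<longrightarrow> M a i j = 0}"

text \<open>Evaluation of a path [a1,...,an] (a1 traversed first) starting at vertex v:
  the matrix M(an)...M(a1); the empty path at v evaluates to the identity.\<close>

fun pev :: "('v \<Rightarrow> nat) \<Rightarrow> ('a \<Rightarrow> 'v) \<Rightarrow> ('a \<Rightarrow> 'v) \<Rightarrow> ('a \<Rightarrow> nat \<Rightarrow> nat \<Rightarrow> 'k::field)
    \<Rightarrow> 'v \<Rightarrow> 'a list \<Rightarrow> nat \<Rightarrow> nat \<Rightarrow> 'k" where
  "pev al src tgt M v [] = idm (al v)"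
| "pev al src tgt M v (a # p) = mmul (al (tgt a)) (pev al src tgt M (tgt a) p) (M a)"

definition is_path :: "('a \<Rightarrow> 'v) \<Rightarrow> ('a \<Rightarrow> 'v) \<Rightarrow> 'a list \<Rightarrow> bool" where
  "is_path src tgt p \<longleftrightarrow> (\<forall>i. Suc i < length p \<longrightarrow> tgt (p ! i) = src (p ! Suc i))"

definition is_cycle :: "('a \<Rightarrow> 'v) \<Rightarrow> ('a \<Rightarrow> 'v) \<Rightarrow> 'a list \<Rightarrow> bool" where
  "is_cycle src tgt p \<longleftrightarrow> p \<noteq> [] \<and> is_path src tgt p \<and> tgt (last p) = src (hd p)"

text \<open>A potential: finite linear combination of cycles, W p = coefficient of cycle p.\<close>

definition potential :: "('a \<Rightarrow> 'v) \<Rightarrow> ('a \<Rightarrow> 'v) \<Rightarrow> ('a list \<Rightarrow> 'k::field) \<Rightarrow> bool" where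
  "potential src tgt W \<longleftrightarrow> finite {p. W p \<noteq> 0} \<and> (\<forall>p. W p \<noteq> 0 \<longrightarrow> is_cycle src tgt p)"

text \<open>Cut: every cycle occurring in W contains exactly one arrow of C (W homogeneous of degree 1).\<close>

definition is_cut :: "'a set \<Rightarrow> ('a list \<Rightarrow> 'k::field) \<Rightarrow> bool" where
  "is_cut C W \<longleftrightarrow> (\<forall>p. W p \<noteq> 0 \<longrightarrow> length (filter (\<lambda>a. a \<in> C) p) = 1)"

definition omega :: "('v \<Rightarrow> nat) \<Rightarrow> ('a \<Rightarrow> 'v) \<Rightarrow> ('a \<Rightarrow> 'v) \<Rightarrow> ('a list \<Rightarrow> 'k::field)
    \<Rightarrow> ('a \<Rightarrow> nat \<Rightarrow> nat \<Rightarrow> 'k) \<Rightarrow> 'k" where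
  "omega al src tgt W M =
     (\<Sum>p\<in>{p. W p \<noteq> 0}. W p * mtr (al (src (hd p))) (pev al src tgt M (src (hd p)) p))"

text \<open>Evaluation at M of the cyclic derivative d_c W: for a cycle a1...an and each position i with
  a_i = c, the path a_(i+1)...a_n a_1...a_(i-1) from tgt c to src c.\<close>

definition cycder :: "('v \<Rightarrow> nat) \<Rightarrow> ('a \<Rightarrow> 'v) \<Rightarrow> ('a \<Rightarrow> 'v) \<Rightarrow> ('a list \<Rightarrow> 'k::field)
    \<Rightarrow> 'a \<Rightarrow> ('a \<Rightarrow> nat \<Rightarrow> nat \<Rightarrow> 'k) \<Rightarrow> nat \<Rightarrow> nat \<Rightarrow> 'k" where
  "cycder al src tgt W c M = (\<lambda>r s.
     \<Sum>p\<in>{p. W p \<noteq> 0}. W p *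
        (\<Sum>i\<in>{i. i < length p \<and> p ! i = c}.
            pev al src tgt M (tgt c) (drop (Suc i) p @ take i p) r s))"

definition vecs :: "nat \<Rightarrow> (nat \<Rightarrow> 'k::field) set" where
  "vecs n = {u. \<forall>j. n \<le> j \<longrightarrow> u j = 0}"

definition sc :: "'k::field \<Rightarrow> (nat \<Rightarrow> 'k) \<Rightarrow> (nat \<Rightarrow> 'k)" where
  "sc c u = (\<lambda>i. c * u i)"

definition subrep :: "('v \<Rightarrow> nat) \<Rightarrow> ('a \<Rightarrow> 'v) \<Rightarrow> ('a \<Rightarrow> 'v) \<Rightarrow> 'a set
    \<Rightarrow> ('a \<Rightarrow> nat \<Rightarrow> nat \<Rightarrow> 'k::field) \<Rightarrow> ('v \<Rightarrow> (nat \<Rightarrow> 'k) set) \<Rightarrow> bool" where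
  "subrep al src tgt A M U \<longleftrightarrow>
     (\<forall>i. U i \<subseteq> vecs (al i) \<and> module.subspace sc (U i)) \<and>
     (\<forall>a\<in>A. \<forall>u\<in>U (src a). mvec (al (src a)) (M a) u \<in> U (tgt a))"

definition dimv :: "('v \<Rightarrow> (nat \<Rightarrow> 'k::field) set) \<Rightarrow> 'v \<Rightarrow> nat" where
  "dimv U = (\<lambda>i. vector_space.dim (sc :: 'k \<Rightarrow> _) (U i))"

definition slope :: "('v::finite \<Rightarrow> int) \<Rightarrow> ('v \<Rightarrow> int) \<Rightarrow> ('v \<Rightarrow> nat) \<Rightarrow> real" where
  "slope \<sigma> \<theta> \<gamma> = real_of_int (\<Sum>i\<in>UNIV. \<sigma> i * int (\<gamma> i)) / real_of_int (\<Sum>i\<in>UNIV. \<theta> i * int (\<gamma> i))"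

definition slope_function :: "('v::finite \<Rightarrow> int) \<Rightarrow> bool" where
  "slope_function \<theta> \<longleftrightarrow> (\<forall>\<gamma>::'v \<Rightarrow> nat. \<gamma> \<noteq> (\<lambda>_. 0) \<longrightarrow> 0 < (\<Sum>i\<in>UNIV. \<theta> i * int (\<gamma> i)))"

definition semistable :: "('v::finite \<Rightarrow> nat) \<Rightarrow> ('a \<Rightarrow> 'v) \<Rightarrow> ('a \<Rightarrow> 'v) \<Rightarrow> 'a set
    \<Rightarrow> ('v \<Rightarrow> int) \<Rightarrow> ('v \<Rightarrow> int) \<Rightarrow> ('a \<Rightarrow> nat \<Rightarrow> nat \<Rightarrow> 'k::field) \<Rightarrow> bool" where
  "semistable al src tgt A \<sigma> \<theta> M \<longleftrightarrow>
     (\<forall>U. subrep al src tgt A M U \<and> (\<exists>i. U i \<noteq> {0}) \<longrightarrow>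
          slope \<sigma> \<theta> (dimv U) \<le> slope \<sigma> \<theta> al)"

definition sst_reps :: "('v::finite \<Rightarrow> nat) \<Rightarrow> ('a \<Rightarrow> 'v) \<Rightarrow> ('a \<Rightarrow> 'v) \<Rightarrow> 'a set
    \<Rightarrow> ('v \<Rightarrow> int) \<Rightarrow> ('v \<Rightarrow> int) \<Rightarrow> ('a \<Rightarrow> nat \<Rightarrow> nat \<Rightarrow> 'k::field) set" where
  "sst_reps al src tgt A \<sigma> \<theta> = {M \<in> reps al src tgt A. semistable al src tgt A \<sigma> \<theta> M}"

definition forget :: "'a set \<Rightarrow> ('a \<Rightarrow> nat \<Rightarrow> nat \<Rightarrow> 'k::field) \<Rightarrow> ('a \<Rightarrow> nat \<Rightarrow> nat \<Rightarrow> 'k)" where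
  "forget C M = (\<lambda>a. if a \<in> C then (\<lambda>i j. 0) else M a)"

text \<open>(al, mu) numb to C: Rep^mu_al(Q) = pi^-1(Rep^mu_al(Q_C)).\<close>

definition numb :: "('v::finite \<Rightarrow> nat) \<Rightarrow> ('a \<Rightarrow> 'v) \<Rightarrow> ('a \<Rightarrow> 'v) \<Rightarrow> 'a set
    \<Rightarrow> ('v \<Rightarrow> int) \<Rightarrow> ('v \<Rightarrow> int) \<Rightarrow> 'k::field itself \<Rightarrow> bool" where
  "numb al src tgt C \<sigma> \<theta> (_::'k itself) \<longleftrightarrow>
     (sst_reps al src tgt UNIV \<sigma> \<theta> :: ('a \<Rightarrow> nat \<Rightarrow> nat \<Rightarrow> 'k) set) =
       {M \<in> reps al src tgt UNIV. forget C M \<in> sst_reps al src tgt (- C) \<sigma> \<theta>}"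

text \<open>Rep^mu_al(J(Q,W;C)): semistable reps of Q_C satisfying d_c W = 0 for all c in C.\<close>

definition jac_sst_reps :: "('v::finite \<Rightarrow> nat) \<Rightarrow> ('a \<Rightarrow> 'v) \<Rightarrow> ('a \<Rightarrow> 'v) \<Rightarrow> ('a list \<Rightarrow> 'k::field)
    \<Rightarrow> 'a set \<Rightarrow> ('v \<Rightarrow> int) \<Rightarrow> ('v \<Rightarrow> int) \<Rightarrow> ('a \<Rightarrow> nat \<Rightarrow> nat \<Rightarrow> 'k) set" where
  "jac_sst_reps al src tgt W C \<sigma> \<theta> =
     {M \<in> sst_reps al src tgt (- C) \<sigma> \<theta>.
        \<forall>c\<in>C. \<forall>i j. i < al (src c) \<and> j < al (tgt c) \<longrightarrow> cycder al src tgt W c M i j = 0}"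

definition phi_count :: "('m \<Rightarrow> 'k::field) \<Rightarrow> 'm set \<Rightarrow> int" where
  "phi_count f X = int (card {M \<in> X. f M = 0}) - int (card {M \<in> X. f M = 1})"

definition euler_Q :: "('a::finite \<Rightarrow> 'v::finite) \<Rightarrow> ('a \<Rightarrow> 'v) \<Rightarrow> ('v \<Rightarrow> nat) \<Rightarrow> ('v \<Rightarrow> nat) \<Rightarrow> int" where
  "euler_Q src tgt al be = (\<Sum>i\<in>UNIV. int (al i * be i)) - (\<Sum>a\<in>UNIV. int (al (src a) * be (tgt a)))"

definition euler_C :: "('a \<Rightarrow> 'v) \<Rightarrow> ('a \<Rightarrow> 'v) \<Rightarrow> 'a set \<Rightarrow> ('v \<Rightarrow> nat) \<Rightarrow> ('v \<Rightarrow> nat) \<Rightarrow> int" where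
  "euler_C src tgt C al be = (\<Sum>c\<in>C. int (al (src c) * be (tgt c)))"

definition euler_JC :: "('a::finite \<Rightarrow> 'v::finite) \<Rightarrow> ('a \<Rightarrow> 'v) \<Rightarrow> 'a set \<Rightarrow> ('v \<Rightarrow> nat) \<Rightarrow> ('v \<Rightarrow> nat) \<Rightarrow> int" where
  "euler_JC src tgt C al be = euler_Q src tgt al be + euler_C src tgt C al be + euler_C src tgt C be al"

definition dim_rep :: "('a::finite \<Rightarrow> 'v) \<Rightarrow> ('a \<Rightarrow> 'v) \<Rightarrow> ('v \<Rightarrow> nat) \<Rightarrow> nat" where
  "dim_rep src tgt al = (\<Sum>a\<in>UNIV. al (src a) * al (tgt a))"

definition dim_gl :: "('v::finite \<Rightarrow> nat) \<Rightarrow> nat" where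
  "dim_gl al = (\<Sum>i\<in>UNIV. al i * al i)"

definition gl_set :: "('v \<Rightarrow> nat) \<Rightarrow> ('v \<Rightarrow> nat \<Rightarrow> nat \<Rightarrow> 'k::field) set" where
  "gl_set al = {g. \<forall>i. bounded_mat (al i) (al i) (g i) \<and>
      (\<exists>h. bounded_mat (al i) (al i) h \<and> mmul (al i) (g i) h = idm (al i) \<and> mmul (al i) h (g i) = idm (al i))}"

end

theory Submission
  imports Defs "HOL-Library.FuncSet"
begin

text \<open>Since every cycle of \<open>W\<close> passes through \<open>C\<close> exactly once, cyclic invariance of the
  trace makes \<open>\<omega>\<close> linear along the fibres of the projection \<open>\<pi>\<close> forgetting the arrows of \<open>C\<close>:
  on the fibre over \<open>M\<^sub>0\<close> it is \<open>M \<mapsto> \<Sum>\<^sub>c\<^sub>\<in>\<^sub>C tr(\<partial>\<^sub>cW(M\<^sub>0) M\<^sub>c)\<close>. Numbness makes the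
  semistable locus the union of the fibres over semistable representations of \<open>Q\<^sub>C\<close>. A fibre over
  a point satisfying all relations \<open>\<partial>\<^sub>cW = 0\<close> lies in \<open>\<omega>\<^sup>-\<^sup>1(0)\<close> and has \<open>q^\<langle>\<alpha>,\<alpha>\<rangle>\<^sub>C\<close>
  points; on any other fibre, translating a single entry of some \<open>M\<^sub>c\<close> shifts \<open>\<omega>\<close> by \<open>1\<close>, so the
  level sets \<open>0\<close> and \<open>1\<close> are equinumerous and the fibre contributes nothing. The virtual form
  follows from \<open>\<langle>\<alpha>,\<alpha>\<rangle>\<^sub>J\<^sub>C = dim GL\<^sub>\<alpha> - dim Rep\<^sub>\<alpha>(Q) + 2\<langle>\<alpha>,\<alpha>\<rangle>\<^sub>C\<close>.\<close>

lemma mmul_assoc: "mmul n (mmul m A B) D = mmul m A (mmul n B D)"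
  unfolding mmul_def
  by (simp add: fun_eq_iff sum_distrib_left sum_distrib_right mult.assoc sum.swap[of _ "{..<n}"])

lemma mtr_mmul_commute: "mtr n (mmul m A B) = mtr m (mmul n B A)"
  unfolding mtr_def mmul_def by (subst sum.swap) (simp add: mult.commute)

lemma mtr_mmul_sum_left:
  "mtr n (mmul m (\<lambda>i j. \<Sum>x\<in>X. f x i j) B) = (\<Sum>x\<in>X. mtr n (mmul m (f x) B))"
proof -
  have "(\<Sum>i<n. \<Sum>l<m. (\<Sum>x\<in>X. f x i l) * B l i) = (\<Sum>i<n. \<Sum>x\<in>X. \<Sum>l<m. f x i l * B l i)"
    by (simp add: sum_distrib_right sum.swap[of _ X])
  also have "\<dots> = (\<Sum>x\<in>X. \<Sum>i<n. \<Sum>l<m. f x i l * B l i)"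
    by (rule sum.swap)
  finally show ?thesis unfolding mtr_def mmul_def .
qed

lemma mtr_mmul_scale_left:
  "mtr n (mmul m (\<lambda>i j. w * A i j) B) = w * mtr n (mmul m A B)"
  unfolding mtr_def mmul_def by (simp add: sum_distrib_left mult.assoc)

lemma mtr_mmul_add_entry_right:
  assumes "r < n" "s < m"
  shows "mtr n (mmul m A (\<lambda>i j. B i j + (if i = s \<and> j = r then u else 0)))
       = mtr n (mmul m A B) + A r s * u"
  using assms unfolding mtr_def mmul_def
  by (simp add: distrib_left sum.distrib if_distrib[of "\<lambda>x. _ * x"] sum.delta' flip: if_if_eq_conj cong: if_cong)

lemma mmul_idm_left:
  assumes "\<And>i j. n \<le> i \<Longrightarrow> A i j = 0"
  shows "mmul n (idm n) A = A"
proof -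
  have "(\<Sum>l<n. (if i = l \<and> i < n then 1 else 0) * A l j) = A i j" for i j
    using assms by (cases "i < n") (auto simp: if_distrib[of "\<lambda>x. x * _"] cong: if_cong)
  then show ?thesis unfolding mmul_def idm_def by (simp add: fun_eq_iff)
qed

lemma mmul_idm_right:
  assumes "\<And>i j. n \<le> j \<Longrightarrow> A i j = 0"
  shows "mmul n A (idm n) = A"
proof -
  have "(\<Sum>l<n. A i l * (if l = j \<and> l < n then 1 else 0)) = A i j" for i j
    using assms by (cases "j < n") (auto simp: if_distrib[of "\<lambda>x. _ * x"] cong: if_cong)
  then show ?thesis unfolding mmul_def idm_def by (simp add: fun_eq_iff)
qed

section \<open>Evaluation of paths and cycles\<close>

lemma pev_cong: "(\<And>a. a \<in> set p \<Longrightarrow> M a = M' a) \<Longrightarrow> pev al src tgt M v p = pev al src tgt M' v p"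
  by (induction p arbitrary: v) auto

lemma pev_start_irrelevant: "p \<noteq> [] \<Longrightarrow> pev al src tgt M v p = pev al src tgt M w p"
  by (cases p) auto

lemma pev_Cons_col_zero:
  "M \<in> reps al src tgt UNIV \<Longrightarrow> al (src a) \<le> j \<Longrightarrow> pev al src tgt M v (a # p) i j = 0"
  by (simp add: mmul_def reps_def)

lemma pev_append:
  assumes "M \<in> reps al src tgt UNIV" and "p \<noteq> []"
  shows "pev al src tgt M v (p @ q)
       = mmul (al (tgt (last p))) (pev al src tgt M (tgt (last p)) q) (pev al src tgt M v p)"
  using assms(2)
proof (induction p arbitrary: v)
  case (Cons a p)
  show ?case
  proof (cases "p = []")
    case True
    have "mmul (al (tgt a)) (idm (al (tgt a))) (M a) = M a"
      using assms(1) by (intro mmul_idm_left) (auto simp: reps_def)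
    then show ?thesis using True by simp
  next
    case False
    then show ?thesis using Cons by (simp add: mmul_assoc)
  qed
qed simp

lemma mtr_pev_cycle_rotate:
  assumes M: "M \<in> reps al src tgt UNIV" and cyc: "is_cycle src tgt p" and i: "i < length p"
  shows "mtr (al (src (hd p))) (pev al src tgt M (src (hd p)) p)
       = mtr (al (src (p ! i))) (mmul (al (tgt (p ! i)))
           (pev al src tgt M (tgt (p ! i)) (drop (Suc i) p @ take i p)) (M (p ! i)))"
proof -
  define x y c v where "x = take i p" and "y = drop (Suc i) p" and "c = p ! i" and "v = src (hd p)"
  have p: "p = x @ c # y" unfolding x_def y_def c_def using i by (simp add: id_take_nth_drop)
  have ne: "p \<noteq> []" and path: "is_path src tgt p" and closed: "tgt (last p) = src (hd p)"
    using cyc unfolding is_cycle_def by auto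
  show ?thesis
  proof (cases "i = 0")
    case True
    then have "p = c # y" using p unfolding x_def by simp
    then show ?thesis using True by simp
  next
    case False
    then have xne: "x \<noteq> []" unfolding x_def using i by auto
    have "last x = p ! (i - 1)" using xne i unfolding x_def by (simp add: last_conv_nth min_def)
    moreover have "tgt (p ! (i - 1)) = src (p ! Suc (i - 1))"
      using path i False unfolding is_path_def by auto
    ultimately have last_x: "tgt (last x) = src c" using False unfolding c_def by simp
    define Px Py where "Px = pev al src tgt M v x" and "Py = pev al src tgt M (tgt c) y"
    have split: "pev al src tgt M v p = mmul (al (src c)) (mmul (al (tgt c)) Py (M c)) Px"
      unfolding Px_def Py_def using pev_append[OF M xne, of v "c # y"] p last_x by simp
    have rotated: "mmul (al v) Px Py = pev al src tgt M (tgt c) (y @ x)"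
    proof (cases "y = []")
      case False
      have "last y = last p" unfolding y_def using False y_def by simp
      then show ?thesis using pev_append[OF M False, of "tgt c" x] closed
        unfolding Px_def Py_def v_def using pev_start_irrelevant[OF xne] by metis
    next
      case True
      then have "i = length p - 1" using i unfolding y_def by simp
      then have "c = last p" unfolding c_def using ne by (simp add: last_conv_nth)
      then have tc: "tgt c = v" using closed v_def by simp
      obtain a x' where xa: "x = a # x'" using xne by (cases x) auto
      have "hd x = hd p" unfolding x_def using False ne by simp
      then have "src a = v" using xa v_def by simp
      then have "mmul (al v) Px (idm (al v)) = Px"
        unfolding Px_def xa using pev_Cons_col_zero[OF M] by (intro mmul_idm_right) blast
      then show ?thesis using True tc unfolding Py_def Px_def using pev_start_irrelevant[OF xne] by simp
    qed
    have "mtr (al v) (pev al src tgt M v p)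
        = mtr (al (src c)) (mmul (al v) Px (mmul (al (tgt c)) Py (M c)))"
      unfolding split by (rule mtr_mmul_commute)
    also have "\<dots> = mtr (al (src c)) (mmul (al (tgt c)) (mmul (al v) Px Py) (M c))"
      by (simp add: mmul_assoc)
    finally show ?thesis unfolding rotated unfolding v_def c_def x_def y_def .
  qed
qed

lemma mtr_pev_cycle_single_cut_arrow:
  assumes M: "M \<in> reps al src tgt UNIV" and cyc: "is_cycle src tgt p"
    and one: "length (filter (\<lambda>a. a \<in> C) p) = 1" and i: "i < length p" "p ! i \<in> C"
  shows "mtr (al (src (hd p))) (pev al src tgt M (src (hd p)) p)
       = mtr (al (src (p ! i))) (mmul (al (tgt (p ! i)))
           (pev al src tgt (forget C M) (tgt (p ! i)) (drop (Suc i) p @ take i p)) (M (p ! i)))"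
proof -
  have "p = take i p @ p ! i # drop (Suc i) p"
    using i(1) by (simp add: Cons_nth_drop_Suc)
  then have "filter (\<lambda>a. a \<in> C) p
      = filter (\<lambda>a. a \<in> C) (take i p) @ p ! i # filter (\<lambda>a. a \<in> C) (drop (Suc i) p)"
    using i(2) by (metis filter.simps(2) filter_append)
  then have "filter (\<lambda>a. a \<in> C) (take i p) = [] \<and> filter (\<lambda>a. a \<in> C) (drop (Suc i) p) = []"
    using one by simp
  then have "a \<notin> C" if "a \<in> set (drop (Suc i) p @ take i p)" for a
    using that by (auto simp: filter_empty_conv)
  then have "pev al src tgt M (tgt (p ! i)) (drop (Suc i) p @ take i p)
           = pev al src tgt (forget C M) (tgt (p ! i)) (drop (Suc i) p @ take i p)"
    by (intro pev_cong) (simp add: forget_def)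
  then show ?thesis using mtr_pev_cycle_rotate[OF M cyc i(1)] by simp
qed

definition trace_pairing :: "('v \<Rightarrow> nat) \<Rightarrow> ('a \<Rightarrow> 'v) \<Rightarrow> ('a \<Rightarrow> 'v) \<Rightarrow> 'a set
    \<Rightarrow> ('a \<Rightarrow> nat \<Rightarrow> nat \<Rightarrow> 'k::field) \<Rightarrow> ('a \<Rightarrow> nat \<Rightarrow> nat \<Rightarrow> 'k) \<Rightarrow> 'k" where
  "trace_pairing al src tgt C D M = (\<Sum>c\<in>C. mtr (al (src c)) (mmul (al (tgt c)) (D c) (M c)))"

lemma omega_eq_trace_pairing_cycder:
  fixes W :: "'a::finite list \<Rightarrow> 'k::field"
  assumes pot: "potential src tgt W" and cut: "is_cut C W" and M: "M \<in> reps al src tgt UNIV"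
  shows "omega al src tgt W M = trace_pairing al src tgt C (\<lambda>c. cycder al src tgt W c (forget C M)) M"
proof -
  define P where "P = {p. W p \<noteq> 0}"
  define B where "B p c = {i. i < length p \<and> p ! i = c}" for p :: "'a list" and c
  define T where "T p c i = mtr (al (src c)) (mmul (al (tgt c))
      (pev al src tgt (forget C M) (tgt c) (drop (Suc i) p @ take i p)) (M c))" for p c i
  have "trace_pairing al src tgt C (\<lambda>c. cycder al src tgt W c (forget C M)) M
      = (\<Sum>c\<in>C. \<Sum>p\<in>P. W p * (\<Sum>i\<in>B p c. T p c i))"
    unfolding trace_pairing_def cycder_def P_def B_def T_def
    by (simp only: mtr_mmul_sum_left mtr_mmul_scale_left)
  also have "\<dots> = (\<Sum>p\<in>P. W p * (\<Sum>c\<in>C. \<Sum>i\<in>B p c. T p c i))"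
    by (subst sum.swap) (simp add: sum_distrib_left)
  also have "\<dots> = (\<Sum>p\<in>P. W p * mtr (al (src (hd p))) (pev al src tgt M (src (hd p)) p))"
  proof (rule sum.cong[OF refl])
    fix p assume "p \<in> P"
    then have cyc: "is_cycle src tgt p" and one: "length (filter (\<lambda>a. a \<in> C) p) = 1"
      using pot cut unfolding P_def potential_def is_cut_def by auto
    define S where "S = {i. i < length p \<and> p ! i \<in> C}"
    have "card S = 1" using one unfolding S_def by (simp add: length_filter_conv_card)
    then obtain i where S: "S = {i}" by (rule card_1_singletonE)
    then have i: "i < length p" "p ! i \<in> C" unfolding S_def by auto
    have "(\<Sum>c\<in>C. \<Sum>i\<in>B p c. T p c i) = (\<Sum>c\<in>C. \<Sum>j\<in>{j \<in> S. p ! j = c}. T p (p ! j) j)"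
      unfolding B_def S_def by (intro sum.cong) auto
    also have "\<dots> = (\<Sum>j\<in>S. T p (p ! j) j)"
      by (rule sum.group) (auto simp: S_def)
    also have "\<dots> = mtr (al (src (hd p))) (pev al src tgt M (src (hd p)) p)"
      unfolding S T_def using mtr_pev_cycle_single_cut_arrow[OF M cyc one i] by simp
    finally show "W p * (\<Sum>c\<in>C. \<Sum>i\<in>B p c. T p c i)
        = W p * mtr (al (src (hd p))) (pev al src tgt M (src (hd p)) p)" by simp
  qed
  finally show ?thesis unfolding omega_def P_def by simp
qed

section \<open>Counting representations\<close>

definition rep_entries :: "('v \<Rightarrow> nat) \<Rightarrow> ('a \<Rightarrow> 'v) \<Rightarrow> ('a \<Rightarrow> 'v) \<Rightarrow> 'a set \<Rightarrow> ('a \<times> nat \<times> nat) set" where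
  "rep_entries al src tgt A = (SIGMA a:A. {..<al (tgt a)} \<times> {..<al (src a)})"

definition rep_of_entries :: "('v \<Rightarrow> nat) \<Rightarrow> ('a \<Rightarrow> 'v) \<Rightarrow> ('a \<Rightarrow> 'v) \<Rightarrow> 'a set
    \<Rightarrow> ('a \<times> nat \<times> nat \<Rightarrow> 'k::field) \<Rightarrow> 'a \<Rightarrow> nat \<Rightarrow> nat \<Rightarrow> 'k" where
  "rep_of_entries al src tgt A f =
     (\<lambda>a i j. if (a, i, j) \<in> rep_entries al src tgt A then f (a, i, j) else 0)"

lemma reps_eq_image_rep_of_entries:
  "reps al src tgt A = rep_of_entries al src tgt A ` (rep_entries al src tgt A \<rightarrow>\<^sub>E UNIV)"
proof
  show "reps al src tgt A \<subseteq> rep_of_entries al src tgt A ` (rep_entries al src tgt A \<rightarrow>\<^sub>E UNIV)"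
  proof
    fix M assume "M \<in> reps al src tgt A"
    then have "M = rep_of_entries al src tgt A (restrict (\<lambda>(a, i, j). M a i j) (rep_entries al src tgt A))"
      unfolding reps_def rep_of_entries_def rep_entries_def by (auto simp: fun_eq_iff not_less)
    moreover have "restrict (\<lambda>(a, i, j). M a i j) (rep_entries al src tgt A) \<in> rep_entries al src tgt A \<rightarrow>\<^sub>E UNIV"
      by simp
    ultimately show "M \<in> rep_of_entries al src tgt A ` (rep_entries al src tgt A \<rightarrow>\<^sub>E UNIV)"
      by (rule image_eqI)
  qed
qed (auto simp: reps_def rep_of_entries_def rep_entries_def)

lemma inj_on_rep_of_entries:
  "inj_on (rep_of_entries al src tgt A) (rep_entries al src tgt A \<rightarrow>\<^sub>E UNIV)"
proof (rule inj_onI)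
  fix f g assume f: "f \<in> rep_entries al src tgt A \<rightarrow>\<^sub>E UNIV" and g: "g \<in> rep_entries al src tgt A \<rightarrow>\<^sub>E UNIV"
    and eq: "rep_of_entries al src tgt A f = rep_of_entries al src tgt A g"
  show "f = g"
  proof (rule PiE_ext[OF f g])
    fix x assume x: "x \<in> rep_entries al src tgt A"
    obtain a i j where "x = (a, i, j)" by (cases x)
    moreover have "rep_of_entries al src tgt A f a i j = rep_of_entries al src tgt A g a i j"
      using eq by simp
    ultimately show "f x = g x" using x unfolding rep_of_entries_def by simp
  qed
qed

lemma
  fixes A :: "'a set"
  assumes "finite A"
  shows finite_reps: "finite (reps al src tgt A :: ('a \<Rightarrow> nat \<Rightarrow> nat \<Rightarrow> 'k::{field,finite}) set)"
    and card_reps: "card (reps al src tgt A :: ('a \<Rightarrow> nat \<Rightarrow> nat \<Rightarrow> 'k) set)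
      = card (UNIV :: 'k set) ^ (\<Sum>a\<in>A. al (src a) * al (tgt a))"
proof -
  have fin: "finite (rep_entries al src tgt A)" and
    card: "card (rep_entries al src tgt A) = (\<Sum>a\<in>A. al (src a) * al (tgt a))"
    using assms unfolding rep_entries_def by (auto simp: card_cartesian_product mult.commute)
  show "finite (reps al src tgt A :: ('a \<Rightarrow> nat \<Rightarrow> nat \<Rightarrow> 'k) set)"
    unfolding reps_eq_image_rep_of_entries using fin by (intro finite_imageI finite_PiE) auto
  have "card (reps al src tgt A :: ('a \<Rightarrow> nat \<Rightarrow> nat \<Rightarrow> 'k) set)
      = card (rep_entries al src tgt A \<rightarrow>\<^sub>E (UNIV :: 'k set))"
    unfolding reps_eq_image_rep_of_entries by (rule card_image[OF inj_on_rep_of_entries])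
  also have "\<dots> = card (UNIV :: 'k set) ^ (\<Sum>a\<in>A. al (src a) * al (tgt a))"
    using fin card by (simp add: card_PiE prod_constant)
  finally show "card (reps al src tgt A :: ('a \<Rightarrow> nat \<Rightarrow> nat \<Rightarrow> 'k) set)
      = card (UNIV :: 'k set) ^ (\<Sum>a\<in>A. al (src a) * al (tgt a))" .
qed

definition rep_fiber :: "('v \<Rightarrow> nat) \<Rightarrow> ('a \<Rightarrow> 'v) \<Rightarrow> ('a \<Rightarrow> 'v) \<Rightarrow> 'a set
    \<Rightarrow> ('a \<Rightarrow> nat \<Rightarrow> nat \<Rightarrow> 'k::field) \<Rightarrow> ('a \<Rightarrow> nat \<Rightarrow> nat \<Rightarrow> 'k) set" where
  "rep_fiber al src tgt C M0 = {M \<in> reps al src tgt UNIV. forget C M = M0}"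

lemma rep_fiber_eq_image_override_on:
  assumes M0: "M0 \<in> reps al src tgt (- C)"
  shows "rep_fiber al src tgt C M0 = (\<lambda>N. override_on M0 N C) ` reps al src tgt C"
proof (intro set_eqI iffI)
  fix M assume M: "M \<in> rep_fiber al src tgt C M0"
  have "M a = M0 a" if "a \<notin> C" for a
  proof -
    have "forget C M a = M0 a" using M unfolding rep_fiber_def by simp
    then show ?thesis using that unfolding forget_def by simp
  qed
  then have "M = override_on M0 (forget (- C) M) C"
    unfolding forget_def override_on_def by auto
  moreover have "forget (- C) M \<in> reps al src tgt C"
    using M unfolding rep_fiber_def reps_def forget_def by auto
  ultimately show "M \<in> (\<lambda>N. override_on M0 N C) ` reps al src tgt C" by blast
next
  fix M assume "M \<in> (\<lambda>N. override_on M0 N C) ` reps al src tgt C"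
  then obtain N where N: "N \<in> reps al src tgt C" and M: "M = override_on M0 N C" by blast
  have "M \<in> reps al src tgt UNIV"
    using N M0 unfolding M reps_def override_on_def by auto
  moreover have "forget C M a = M0 a" for a
    using M0 unfolding M reps_def forget_def override_on_def by (cases "a \<in> C") (auto simp: fun_eq_iff)
  ultimately show "M \<in> rep_fiber al src tgt C M0" unfolding rep_fiber_def by auto
qed

lemma inj_on_override_on_reps:
  assumes "M0 \<in> reps al src tgt (- C)"
  shows "inj_on (\<lambda>N. override_on M0 N C) (reps al src tgt C)"
proof (rule inj_onI)
  fix N N' assume N: "N \<in> reps al src tgt C" and N': "N' \<in> reps al src tgt C"
    and eq: "override_on M0 N C = override_on M0 N' C"
  show "N = N'"
  proof
    fix a show "N a = N' a"
      using fun_cong[OF eq, of a] N N' unfolding reps_def override_on_def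
      by (cases "a \<in> C") (auto simp: fun_eq_iff)
  qed
qed

lemma card_rep_fiber:
  fixes M0 :: "'a \<Rightarrow> nat \<Rightarrow> nat \<Rightarrow> 'k::field"
  assumes "M0 \<in> reps al src tgt (- C)"
  shows "card (rep_fiber al src tgt C M0) = card (reps al src tgt C :: ('a \<Rightarrow> nat \<Rightarrow> nat \<Rightarrow> 'k) set)"
  unfolding rep_fiber_eq_image_override_on[OF assms]
  by (rule card_image[OF inj_on_override_on_reps[OF assms]])

lemma card_level_set_shift:
  fixes f :: "'b \<Rightarrow> 'c::cancel_semigroup_add"
  assumes g: "bij_betw g F F" and shift: "\<And>x. x \<in> F \<Longrightarrow> f (g x) = f x + d"
  shows "card {x \<in> F. f x = a + d} = card {x \<in> F. f x = a}"
proof -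
  have "g ` {x \<in> F. f x = a} = {x \<in> F. f x = a + d}"
  proof (intro set_eqI iffI)
    fix y assume y: "y \<in> {x \<in> F. f x = a + d}"
    then obtain x where x: "x \<in> F" "y = g x"
      using g unfolding bij_betw_def by auto
    then have "f x = a" using y shift[OF x(1)] by simp
    with x show "y \<in> g ` {x \<in> F. f x = a}" by blast
  next
    fix y assume "y \<in> g ` {x \<in> F. f x = a}"
    then show "y \<in> {x \<in> F. f x = a + d}"
      using g shift unfolding bij_betw_def by auto
  qed
  moreover have "inj_on g {x \<in> F. f x = a}"
    using g unfolding bij_betw_def by (metis (no_types, lifting) inj_on_subset mem_Collect_eq subsetI)
  ultimately show ?thesis using card_image by fastforce
qed

definition add_entry :: "'a \<Rightarrow> nat \<Rightarrow> nat \<Rightarrow> 'k::field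
    \<Rightarrow> ('a \<Rightarrow> nat \<Rightarrow> nat \<Rightarrow> 'k) \<Rightarrow> 'a \<Rightarrow> nat \<Rightarrow> nat \<Rightarrow> 'k" where
  "add_entry c i j u M = (\<lambda>a i' j'. M a i' j' + (if a = c \<and> i' = i \<and> j' = j then u else 0))"

lemma trace_pairing_add_entry:
  assumes "c \<in> C" "finite C" "r < al (src c)" "s < al (tgt c)"
  shows "trace_pairing al src tgt C D (add_entry c s r u M) = trace_pairing al src tgt C D M + D c r s * u"
proof -
  have "mtr (al (src c')) (mmul (al (tgt c')) (D c') (add_entry c s r u M c'))
      = mtr (al (src c')) (mmul (al (tgt c')) (D c') (M c')) + (if c' = c then D c r s * u else 0)" for c'
    using assms(3,4) mtr_mmul_add_entry_right unfolding add_entry_def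
    by (cases "c' = c") auto
  then show ?thesis using assms(1,2) unfolding trace_pairing_def by (simp add: sum.distrib)
qed

definition jac_relations :: "('v \<Rightarrow> nat) \<Rightarrow> ('a \<Rightarrow> 'v) \<Rightarrow> ('a \<Rightarrow> 'v) \<Rightarrow> ('a list \<Rightarrow> 'k::field)
    \<Rightarrow> 'a set \<Rightarrow> ('a \<Rightarrow> nat \<Rightarrow> nat \<Rightarrow> 'k) \<Rightarrow> bool" where
  "jac_relations al src tgt W C M \<longleftrightarrow>
     (\<forall>c\<in>C. \<forall>i j. i < al (src c) \<and> j < al (tgt c) \<longrightarrow> cycder al src tgt W c M i j = 0)"

lemma phi_count_omega_rep_fiber:
  fixes W :: "'a::finite list \<Rightarrow> 'k::{field,finite}"
  assumes pot: "potential src tgt W" and cut: "is_cut C W" and M0: "M0 \<in> reps al src tgt (- C)"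
  shows "phi_count (omega al src tgt W) (rep_fiber al src tgt C M0)
       = (if jac_relations al src tgt W C M0 then int (card (reps al src tgt C :: ('a \<Rightarrow> nat \<Rightarrow> nat \<Rightarrow> 'k) set)) else 0)"
proof -
  define F where "F = rep_fiber al src tgt C M0"
  define D where "D c = cycder al src tgt W c M0" for c
  have omega_F: "omega al src tgt W M = trace_pairing al src tgt C D M" if "M \<in> F" for M
    using omega_eq_trace_pairing_cycder[OF pot cut, of M al] that unfolding F_def rep_fiber_def D_def by simp
  show ?thesis
  proof (cases "jac_relations al src tgt W C M0")
    case True
    then have "trace_pairing al src tgt C D M = 0" for M
      unfolding trace_pairing_def mtr_def mmul_def jac_relations_def D_def by simp
    then have zeros: "{M \<in> F. omega al src tgt W M = 0} = F"
      and ones: "{M \<in> F. omega al src tgt W M = 1} = {}"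
      using omega_F by auto
    have "phi_count (omega al src tgt W) F = int (card F)"
      unfolding phi_count_def zeros ones by simp
    then show ?thesis using True card_rep_fiber[OF M0] unfolding F_def by simp
  next
    case False
    then obtain c r s where c: "c \<in> C" "r < al (src c)" "s < al (tgt c)" and d: "D c r s \<noteq> 0"
      unfolding jac_relations_def D_def by blast
    define g where "g u = add_entry c s r u" for u :: 'k
    have "forget C (g u M) = forget C M" for u M
      using c(1) unfolding forget_def g_def add_entry_def by (auto simp: fun_eq_iff)
    moreover have "g u M \<in> reps al src tgt UNIV" if "M \<in> reps al src tgt UNIV" for u M
      using that c(2,3) unfolding reps_def g_def add_entry_def by auto
    ultimately have g_F: "g u M \<in> F" if "M \<in> F" for u M
      using that unfolding F_def rep_fiber_def by simp
    have "g (- u) (g u M) = M" "g u (g (- u) M) = M" for u M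
      unfolding g_def add_entry_def by (simp_all add: fun_eq_iff)
    then have bij: "bij_betw (g (1 / D c r s)) F F"
      by (intro bij_betwI[where g = "g (- (1 / D c r s))"]) (auto simp: g_F)
    have "omega al src tgt W (g (1 / D c r s) M) = omega al src tgt W M + 1" if "M \<in> F" for M
    proof -
      have "omega al src tgt W (g (1 / D c r s) M) = trace_pairing al src tgt C D (g (1 / D c r s) M)"
        using omega_F g_F that by simp
      also have "\<dots> = trace_pairing al src tgt C D M + D c r s * (1 / D c r s)"
        unfolding g_def using c by (intro trace_pairing_add_entry) simp_all
      also have "\<dots> = omega al src tgt W M + 1"
        using d omega_F[OF that] by simp
      finally show ?thesis .
    qed
    then have "card {M \<in> F. omega al src tgt W M = 0 + 1} = card {M \<in> F. omega al src tgt W M = 0}"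
      by (rule card_level_set_shift[OF bij])
    then show ?thesis using False unfolding phi_count_def F_def by simp
  qed
qed

lemma phi_count_eq_sum:
  assumes "finite X"
  shows "phi_count f X = (\<Sum>x\<in>X. (if f x = 0 then 1 else 0) - (if f x = 1 then 1 else 0))"
proof -
  have "int (card {x \<in> X. P x}) = (\<Sum>x\<in>X. if P x then 1 else 0)" for P
    using assms by (simp add: sum.If_cases Int_def)
  then show ?thesis unfolding phi_count_def by (simp add: sum_subtractf)
qed

lemma phi_count_partition:
  assumes "finite X" "finite Y" "g ` X \<subseteq> Y"
  shows "phi_count f X = (\<Sum>y\<in>Y. phi_count f {x \<in> X. g x = y})"
  using assms by (simp add: phi_count_eq_sum sum.group)

lemma euler_C_eq_of_nat: "euler_C src tgt C al be = int (\<Sum>c\<in>C. al (src c) * be (tgt c))"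
  unfolding euler_C_def by simp

lemma euler_JC_diagonal:
  "euler_JC src tgt C al al = int (dim_gl al) - int (dim_rep src tgt al) + 2 * euler_C src tgt C al al"
  unfolding euler_JC_def euler_Q_def dim_gl_def dim_rep_def by simp

lemma phi_count_sst_reps:
  fixes W :: "'a::finite list \<Rightarrow> 'k::{field,finite}" and al :: "'v::finite \<Rightarrow> nat"
  assumes pot: "potential src tgt W" and cut: "is_cut C W" and numb: "numb al src tgt C \<sigma> \<theta> TYPE('k)"
  shows "phi_count (omega al src tgt W) (sst_reps al src tgt UNIV \<sigma> \<theta> :: ('a \<Rightarrow> nat \<Rightarrow> nat \<Rightarrow> 'k) set)
       = int (card (UNIV :: 'k set)) ^ nat (euler_C src tgt C al al) * int (card (jac_sst_reps al src tgt W C \<sigma> \<theta>))"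
proof -
  define X where "X = (sst_reps al src tgt UNIV \<sigma> \<theta> :: ('a \<Rightarrow> nat \<Rightarrow> nat \<Rightarrow> 'k) set)"
  define S where "S = (sst_reps al src tgt (- C) \<sigma> \<theta> :: ('a \<Rightarrow> nat \<Rightarrow> nat \<Rightarrow> 'k) set)"
  define K where "K = int (card (reps al src tgt C :: ('a \<Rightarrow> nat \<Rightarrow> nat \<Rightarrow> 'k) set))"
  have X: "X = {M \<in> reps al src tgt UNIV. forget C M \<in> S}"
    using numb unfolding numb_def X_def S_def by simp
  have S_reps: "S \<subseteq> reps al src tgt (- C)" unfolding S_def sst_reps_def by auto
  have "finite X" "finite S"
    using finite_reps[of UNIV al src tgt] finite_reps[of "- C" al src tgt] S_reps
    unfolding X by (auto intro: finite_subset)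
  then have "phi_count (omega al src tgt W) X
      = (\<Sum>M0\<in>S. phi_count (omega al src tgt W) {M \<in> X. forget C M = M0})"
    by (rule phi_count_partition) (auto simp: X)
  also have "\<dots> = (\<Sum>M0\<in>S. if jac_relations al src tgt W C M0 then K else 0)"
  proof (rule sum.cong[OF refl])
    fix M0 assume "M0 \<in> S"
    then have "{M \<in> X. forget C M = M0} = rep_fiber al src tgt C M0"
      unfolding X rep_fiber_def by auto
    then show "phi_count (omega al src tgt W) {M \<in> X. forget C M = M0}
        = (if jac_relations al src tgt W C M0 then K else 0)"
      using phi_count_omega_rep_fiber[OF pot cut] \<open>M0 \<in> S\<close> S_reps unfolding K_def by auto
  qed
  also have "\<dots> = K * int (card (jac_sst_reps al src tgt W C \<sigma> \<theta>))"
    using \<open>finite S\<close> unfolding jac_sst_reps_def jac_relations_def S_def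
    by (simp add: sum.inter_filter[symmetric])
  also have "K = int (card (UNIV :: 'k set)) ^ nat (euler_C src tgt C al al)"
    unfolding K_def card_reps[OF finite_class.finite] euler_C_eq_of_nat nat_int by simp
  finally show ?thesis unfolding X_def .
qed

lemma powr_virtual_normalization:
  fixes q R G x g :: real
  assumes "0 < q"
  shows "q powr (- R / 2) * (q ^ N * x) / (q powr (- G / 2) * g)
       = q powr ((G - R + 2 * real N) / 2) * (x / g)"
proof -
  define E where "E = (G - R + 2 * real N) / 2"
  have "E + - G / 2 = - R / 2 + real N" unfolding E_def by (simp add: field_simps)
  then have exp: "q powr (- R / 2) * q ^ N = q powr E * q powr (- G / 2)"
    using assms by (simp add: powr_add[symmetric] powr_realpow[symmetric])
  have "q powr (- R / 2) * (q ^ N * x) / (q powr (- G / 2) * g)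
      = (q powr E * q powr (- G / 2)) * x / (q powr (- G / 2) * g)"
    by (simp only: exp[symmetric] mult.assoc)
  also have "\<dots> = q powr E * (x / g)"
    using assms by simp
  finally show ?thesis unfolding E_def .
qed

theorem lemmaL:
  fixes src tgt :: "'a::finite \<Rightarrow> 'v::finite"
    and W :: "'a list \<Rightarrow> 'k::{field,finite}"
    and C :: "'a set"
    and al :: "'v \<Rightarrow> nat"
    and \<sigma> \<theta> :: "'v \<Rightarrow> int"
  assumes "potential src tgt W"
    and "is_cut C W"
    and "slope_function \<theta>"
    and "numb al src tgt C \<sigma> \<theta> TYPE('k)"
  defines "q \<equiv> card (UNIV :: 'k set)"
    and "X \<equiv> (sst_reps al src tgt UNIV \<sigma> \<theta> :: ('a \<Rightarrow> nat \<Rightarrow> nat \<Rightarrow> 'k) set)"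
    and "J \<equiv> jac_sst_reps al src tgt W C \<sigma> \<theta>"
  shows "phi_count (omega al src tgt W) X = int q ^ nat (euler_C src tgt C al al) * int (card J)
    \<and> (real q powr (- real (dim_rep src tgt al) / 2) * real_of_int (phi_count (omega al src tgt W) X))
           / (real q powr (- real (dim_gl al) / 2) * real (card (gl_set al :: ('v \<Rightarrow> nat \<Rightarrow> nat \<Rightarrow> 'k) set)))
         = real q powr (real_of_int (euler_JC src tgt C al al) / 2)
           * (real (card J) / real (card (gl_set al :: ('v \<Rightarrow> nat \<Rightarrow> nat \<Rightarrow> 'k) set)))"
proof
  show count: "phi_count (omega al src tgt W) X = int q ^ nat (euler_C src tgt C al al) * int (card J)"
    unfolding q_def X_def J_def using phi_count_sst_reps[OF assms(1,2,4)] .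
  have "0 < real q" unfolding q_def by (simp add: card_gt_0_iff)
  moreover have "real_of_int (euler_JC src tgt C al al)
      = real (dim_gl al) - real (dim_rep src tgt al) + 2 * real (nat (euler_C src tgt C al al))"
    unfolding euler_JC_diagonal euler_C_eq_of_nat nat_int by simp
  ultimately show "(real q powr (- real (dim_rep src tgt al) / 2) * real_of_int (phi_count (omega al src tgt W) X))
           / (real q powr (- real (dim_gl al) / 2) * real (card (gl_set al :: ('v \<Rightarrow> nat \<Rightarrow> nat \<Rightarrow> 'k) set)))
         = real q powr (real_of_int (euler_JC src tgt C al al) / 2)
           * (real (card J) / real (card (gl_set al :: ('v \<Rightarrow> nat \<Rightarrow> nat \<Rightarrow> 'k) set)))"
    unfolding count using powr_virtual_normalization by simp
qed

end
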